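(* Fix $p\in(1,\infty)$ and Radon measures $\mu,\nu$ on $\mathbb{R}^N$. Let $M\in W(\mathbb{R}^N\times\mathbb{R}^N)=W(\mathbb{R}^{2N})$. Then $M$ is a Schur multiplier on the set of restrictedly $L^p$ bounded singular kernels on $\mathbb{R}^N$, with restricted Schur norm at most $\|M\|_{W(\mathbb{R}^{2N})}$.
   Context: A singular kernel on $\mathbb{R}^N$ (w.r.t. Radon measures $\mu,\nu$) is a $\mu\times\nu$-measurable function $K$ on $\mathbb{R}^N\times\mathbb{R}^N$ which is locally in $L^2(\mu\times\nu)$ off the diagonal $\{s=t\}$. It is restrictedly $L^p$ bounded with bound $C$ if $\left|\int K(s,t)f(t)g(s)\,d\mu(t)\,d\nu(s)\right|\le C\|f\|_{L^p(\mu)}\|g\|_{L^{p'}(\nu)}$ ($1/p+1/p'=1$) for all bounded Borel $f,g$ with compact supports at positive distance from each other. A function $M$ on $\mathbb{R}^N\times\mathbb{R}^N$ is a Schur multiplier on the set of restrictedly $L^p$ bounded singular kernels if there is $C_1$ such that for every restrictedly $L^p$ bounded singular kernel $K$ with bound $C$, $MK$ is restrictedly $L^p$ bounded with bound $C_1C$; the least such $C_1$ is the restricted Schur norm. The Wiener algebra $W(\mathbb{R}^d)$ is the set of $f=\widehat h$, $h\in L^1(\mathbb{R}^d)$, with $\|f\|_W=\|h\|_{L^1}$, where $\widehat h(\xi)=\int h(x)e^{-i\xi\cdot x}dx$. *)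

theory Defs
  imports "HOL-Analysis.Analysis"
begin

definition radon_measure :: "'a::euclidean_space measure \<Rightarrow> bool" where
  "radon_measure \<mu> \<longleftrightarrow> sets \<mu> = sets borel \<and> (\<forall>K. compact K \<longrightarrow> emeasure \<mu> K < \<infinity>)"

text \<open>L^p norm (for the bounded, compactly supported functions used below).\<close>
definition Lp_norm :: "'a measure \<Rightarrow> real \<Rightarrow> ('a \<Rightarrow> complex) \<Rightarrow> real" where
  "Lp_norm \<mu> p f = (\<integral>x. norm (f x) powr p \<partial>\<mu>) powr (1 / p)"

definition fsupp :: "('a::topological_space \<Rightarrow> complex) \<Rightarrow> 'a set" where
  "fsupp f = closure {x. f x \<noteq> 0}"

text \<open>Kernels are functions of (s,t); the product measure has s distributed by nu, t by mu.\<close>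
definition singular_kernel ::
  "'a::euclidean_space measure \<Rightarrow> 'a measure \<Rightarrow> ('a \<times> 'a \<Rightarrow> complex) \<Rightarrow> bool" where
  "singular_kernel \<mu> \<nu> K \<longleftrightarrow>
     K \<in> borel_measurable (completion (\<nu> \<Otimes>\<^sub>M \<mu>)) \<and>
     (\<forall>C. compact C \<and> C \<inter> {z. fst z = snd z} = {} \<longrightarrow>
        (\<integral>\<^sup>+ z. ennreal ((norm (K z))\<^sup>2) * indicator C z \<partial>(completion (\<nu> \<Otimes>\<^sub>M \<mu>))) < \<infinity>)"

definition admissible_pair :: "('a::euclidean_space \<Rightarrow> complex) \<Rightarrow> ('a \<Rightarrow> complex) \<Rightarrow> bool" where
  "admissible_pair f g \<longleftrightarrow>
     f \<in> borel_measurable borel \<and> g \<in> borel_measurable borel \<and>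
     bounded (range f) \<and> bounded (range g) \<and>
     compact (fsupp f) \<and> compact (fsupp g) \<and>
     (\<exists>\<delta>>0. \<forall>x\<in>fsupp f. \<forall>y\<in>fsupp g. dist x y \<ge> \<delta>)"

definition restr_Lp_bounded ::
  "real \<Rightarrow> 'a::euclidean_space measure \<Rightarrow> 'a measure \<Rightarrow> ('a \<times> 'a \<Rightarrow> complex) \<Rightarrow> real \<Rightarrow> bool" where
  "restr_Lp_bounded p \<mu> \<nu> K C \<longleftrightarrow>
     (\<forall>f g. admissible_pair f g \<longrightarrow>
        norm (\<integral>z. K z * f (snd z) * g (fst z) \<partial>(completion (\<nu> \<Otimes>\<^sub>M \<mu>)))
          \<le> C * Lp_norm \<mu> p f * Lp_norm \<nu> (p / (p - 1)) g)"

definition schur_multiplier_bound ::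
  "real \<Rightarrow> 'a::euclidean_space measure \<Rightarrow> 'a measure \<Rightarrow> ('a \<times> 'a \<Rightarrow> complex) \<Rightarrow> real \<Rightarrow> bool" where
  "schur_multiplier_bound p \<mu> \<nu> M B \<longleftrightarrow>
     (\<forall>K C. singular_kernel \<mu> \<nu> K \<and> restr_Lp_bounded p \<mu> \<nu> K C \<longrightarrow>
        singular_kernel \<mu> \<nu> (\<lambda>z. M z * K z) \<and>
        restr_Lp_bounded p \<mu> \<nu> (\<lambda>z. M z * K z) (B * C))"

definition fourier :: "('b::euclidean_space \<Rightarrow> complex) \<Rightarrow> 'b \<Rightarrow> complex" where
  "fourier h \<xi> = (\<integral>x. h x * cis (- (\<xi> \<bullet> x)) \<partial>lborel)"

end

theory Submission
  imports Defs
begin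

text \<open>Since \<open>M = \<hat>h\<close>, \<open>M(s,t) = \<integral> h(w) exp(-i s\<cdot>w\<^sub>1) exp(-i t\<cdot>w\<^sub>2) dw\<close> is an average of
  products of characters. For fixed \<open>w\<close>, pairing \<open>exp(-i s\<cdot>w\<^sub>1) K(s,t) exp(-i t\<cdot>w\<^sub>2)\<close> with
  \<open>f, g\<close> is pairing \<open>K\<close> with the modulated test functions \<open>exp(-i t\<cdot>w\<^sub>2) f(t)\<close> and
  \<open>exp(-i s\<cdot>w\<^sub>1) g(s)\<close>, which keep the supports and \<open>L\<^sup>p\<close> norms of \<open>f\<close> and \<open>g\<close>.
  Integrating in \<open>w\<close> (Fubini) bounds the pairing of \<open>MK\<close> by \<open>\<parallel>h\<parallel>\<^sub>1 C \<parallel>f\<parallel>\<^sub>p \<parallel>g\<parallel>\<^sub>p\<^sub>'\<close>, while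
  \<open>|M| \<le> \<parallel>h\<parallel>\<^sub>1\<close> keeps \<open>MK\<close> locally square integrable off the diagonal.\<close>

lemma space_radon_measure: "radon_measure \<mu> \<Longrightarrow> space \<mu> = UNIV"
  unfolding radon_measure_def by (metis sets_eq_imp_space_eq space_borel)

lemma sigma_finite_measure_radon:
  fixes \<mu> :: "'a::euclidean_space measure"
  assumes "radon_measure \<mu>"
  shows "sigma_finite_measure \<mu>"
  unfolding sigma_finite_measure_def
proof (intro exI conjI)
  let ?C = "range (\<lambda>n::nat. cball (0::'a) (real n))"
  show "countable ?C" by simp
  show "?C \<subseteq> sets \<mu>" "\<forall>a\<in>?C. emeasure \<mu> a \<noteq> \<infinity>"
    using assms unfolding radon_measure_def by (auto simp: less_top)
  have "x \<in> \<Union>?C" for x :: 'a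
    using real_arch_simple[of "norm x"] by (auto simp: dist_norm)
  then show "\<Union>?C = space \<mu>" using space_radon_measure[OF assms] by auto
qed

lemma sigma_finite_measure_completion:
  assumes "sigma_finite_measure M"
  shows "sigma_finite_measure (completion M)"
proof -
  interpret sigma_finite_measure M by fact
  obtain C where C: "countable C" "C \<subseteq> sets M" "\<Union>C = space M" "\<forall>a\<in>C. emeasure M a \<noteq> \<infinity>"
    using sigma_finite_countable by blast
  then have "\<forall>a\<in>C. emeasure (completion M) a \<noteq> \<infinity>"
    by (auto simp: emeasure_completion main_part_sets)
  with C show ?thesis
    unfolding sigma_finite_measure_def by (intro exI[of _ C]) (auto intro: sets_completionI_sets)
qed

lemma sets_pair_radon_measure:
  fixes \<mu> \<nu> :: "'a::euclidean_space measure"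
  assumes "radon_measure \<nu>" "radon_measure \<mu>"
  shows "sets (\<nu> \<Otimes>\<^sub>M \<mu>) = sets (borel :: ('a \<times> 'a) measure)"
proof -
  have "sets (\<nu> \<Otimes>\<^sub>M \<mu>) = sets (borel \<Otimes>\<^sub>M (borel :: 'a measure))"
    using assms unfolding radon_measure_def by (intro sets_pair_measure_cong) auto
  then show ?thesis by (simp only: borel_prod)
qed

lemma borel_measurable_completion_pair_radon:
  fixes \<mu> \<nu> :: "'a::euclidean_space measure"
  assumes "radon_measure \<nu>" "radon_measure \<mu>"
    and "F \<in> borel_measurable (borel :: ('a \<times> 'a) measure)"
  shows "F \<in> borel_measurable (completion (\<nu> \<Otimes>\<^sub>M \<mu>))"
  using assms(3) measurable_cong_sets[OF sets_pair_radon_measure[OF assms(1,2)] refl]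
  by (blast intro: measurable_completion)

lemma compact_in_sets_completion_pair_radon:
  fixes \<mu> \<nu> :: "'a::euclidean_space measure"
  assumes "radon_measure \<nu>" "radon_measure \<mu>" "compact D"
  shows "D \<in> sets (completion (\<nu> \<Otimes>\<^sub>M \<mu>))"
  using sets_pair_radon_measure[OF assms(1,2)] assms(3)
  by (simp add: compact_imp_closed borel_closed)

lemma integrable_indicator_scaleR_of_square:
  fixes K :: "'a \<Rightarrow> 'b::{banach, second_countable_topology}"
  assumes K: "K \<in> borel_measurable Q" and D: "D \<in> sets Q" "emeasure Q D < \<infinity>"
    and L2: "(\<integral>\<^sup>+ z. ennreal ((norm (K z))\<^sup>2) * indicator D z \<partial>Q) < \<infinity>"
  shows "integrable Q (\<lambda>z. indicator D z *\<^sub>R K z)"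
proof (rule integrableI_bounded)
  show "(\<lambda>z. indicator D z *\<^sub>R K z) \<in> borel_measurable Q" using K D by measurable
  have "norm (K z) \<le> 1 + (norm (K z))\<^sup>2" for z
  proof -
    have "2 * norm (K z) \<le> 1 + (norm (K z))\<^sup>2"
      using sum_squares_ge_zero[of "norm (K z) - 1" 0] by (simp add: power2_eq_square algebra_simps)
    then show ?thesis using norm_ge_zero[of "K z"] by linarith
  qed
  then have "(\<integral>\<^sup>+ z. ennreal (norm (indicator D z *\<^sub>R K z)) \<partial>Q)
      \<le> (\<integral>\<^sup>+ z. indicator D z + ennreal ((norm (K z))\<^sup>2) * indicator D z \<partial>Q)"
  proof (intro nn_integral_mono)
    fix z
    have "ennreal (norm (K z)) \<le> ennreal (1 + (norm (K z))\<^sup>2)"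
      by (rule ennreal_leI) fact
    then show "ennreal (norm (indicator D z *\<^sub>R K z))
        \<le> indicator D z + ennreal ((norm (K z))\<^sup>2) * indicator D z"
      by (simp add: indicator_def ennreal_plus)
  qed
  also have "\<dots> = emeasure Q D + (\<integral>\<^sup>+ z. ennreal ((norm (K z))\<^sup>2) * indicator D z \<partial>Q)"
    using K D by (simp add: nn_integral_add)
  also have "\<dots> < \<infinity>" using D(2) L2 by simp
  finally show "(\<integral>\<^sup>+ z. ennreal (norm (indicator D z *\<^sub>R K z)) \<partial>Q) < \<infinity>" .
qed

lemma fsupp_zero: "x \<notin> fsupp f \<Longrightarrow> f x = 0"
  unfolding fsupp_def by (meson closure_subset mem_Collect_eq subsetD)

lemma admissible_pair_supports_off_diagonal:
  assumes "admissible_pair f g"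
  shows "(fsupp g \<times> fsupp f) \<inter> {z. fst z = snd z} = {}"
proof -
  obtain \<delta> where "\<delta> > 0" "\<forall>x\<in>fsupp f. \<forall>y\<in>fsupp g. dist x y \<ge> \<delta>"
    using assms unfolding admissible_pair_def by blast
  then have "x \<notin> fsupp f \<or> x \<notin> fsupp g" for x
    by (metis dist_self not_le)
  then show ?thesis by auto
qed

lemma integrable_kernel_admissible_pair:
  fixes \<mu> \<nu> :: "'a::euclidean_space measure"
  assumes rn: "radon_measure \<nu>" and rm: "radon_measure \<mu>"
    and K: "singular_kernel \<mu> \<nu> K" and fg: "admissible_pair f g"
  shows "integrable (completion (\<nu> \<Otimes>\<^sub>M \<mu>)) (\<lambda>z. K z * f (snd z) * g (fst z))"
proof -
  define Q where "Q = completion (\<nu> \<Otimes>\<^sub>M \<mu>)"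
  define D where "D = fsupp g \<times> fsupp f"
  obtain Bf Bg where Bf: "\<And>x. norm (f x) \<le> Bf" and Bg: "\<And>x. norm (g x) \<le> Bg"
    using fg unfolding admissible_pair_def bounded_iff by blast
  have fm: "f \<in> borel_measurable borel" and gm: "g \<in> borel_measurable borel"
    and cf: "compact (fsupp f)" and cg: "compact (fsupp g)"
    using fg unfolding admissible_pair_def by blast+
  have "compact D" "D \<inter> {z. fst z = snd z} = {}"
    unfolding D_def using cf cg admissible_pair_supports_off_diagonal[OF fg] by (auto intro: compact_Times)
  then have Km: "K \<in> borel_measurable Q"
    and L2: "(\<integral>\<^sup>+ z. ennreal ((norm (K z))\<^sup>2) * indicator D z \<partial>Q) < \<infinity>"
    using K unfolding singular_kernel_def Q_def by blast+
  have DQ: "D \<in> sets Q"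
    unfolding Q_def D_def by (intro compact_in_sets_completion_pair_radon rn rm compact_Times cf cg)
  interpret mu: sigma_finite_measure \<mu> by (rule sigma_finite_measure_radon[OF rm])
  have "fsupp g \<in> sets \<nu>" "fsupp f \<in> sets \<mu>"
    using rn rm cf cg unfolding radon_measure_def by (auto simp: compact_imp_closed borel_closed)
  then have "emeasure Q D = emeasure \<nu> (fsupp g) * emeasure \<mu> (fsupp f)"
    using DQ unfolding Q_def D_def by (simp add: mu.emeasure_pair_measure_Times)
  also have "\<dots> < \<infinity>"
    using rn rm cf cg unfolding radon_measure_def by (simp add: ennreal_mult_less_top)
  finally have "integrable Q (\<lambda>z. indicator D z *\<^sub>R K z)"
    by (rule integrable_indicator_scaleR_of_square[OF Km DQ _ L2])
  then have KD: "integrable Q (\<lambda>z. (Bf * Bg) *\<^sub>R (indicator D z *\<^sub>R K z))"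
    by (rule integrable_scaleR_right)
  have "(\<lambda>z::'a \<times> 'a. f (snd z)) \<in> borel_measurable borel" "(\<lambda>z::'a \<times> 'a. g (fst z)) \<in> borel_measurable borel"
    by (rule measurable_compose[OF _ fm] measurable_compose[OF _ gm],
        intro borel_measurable_continuous_onI continuous_intros)+
  then have "(\<lambda>z. f (snd z)) \<in> borel_measurable Q" "(\<lambda>z. g (fst z)) \<in> borel_measurable Q"
    unfolding Q_def by (blast intro: borel_measurable_completion_pair_radon[OF rn rm])+
  then have "(\<lambda>z. K z * f (snd z) * g (fst z)) \<in> borel_measurable Q"
    using Km by (intro borel_measurable_times)
  moreover have "norm (K z * f (snd z) * g (fst z)) \<le> norm ((Bf * Bg) *\<^sub>R (indicator D z *\<^sub>R K z))" for z
  proof (cases "z \<in> D")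
    case True
    have "0 \<le> Bf" "0 \<le> Bg" using order_trans[OF norm_ge_zero Bf] order_trans[OF norm_ge_zero Bg] .
    then have "norm (f (snd z)) * norm (g (fst z)) \<le> Bf * Bg"
      by (intro mult_mono Bf Bg) auto
    then show ?thesis
      using True by (simp add: norm_mult mult_left_mono mult.commute mult.left_commute)
  next
    case False
    then have "f (snd z) = 0 \<or> g (fst z) = 0"
      unfolding D_def by (cases z) (auto intro: fsupp_zero)
    then show ?thesis by auto
  qed
  ultimately show ?thesis
    unfolding Q_def[symmetric] by (blast intro: Bochner_Integration.integrable_bound[OF KD] AE_I2)
qed

lemma sigma_finite_measure_completion_pair_radon:
  fixes \<mu> \<nu> :: "'a::euclidean_space measure"
  assumes "radon_measure \<nu>" "radon_measure \<mu>"
  shows "sigma_finite_measure (completion (\<nu> \<Otimes>\<^sub>M \<mu>))"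
proof -
  interpret nu: sigma_finite_measure \<nu> by (rule sigma_finite_measure_radon[OF assms(1)])
  interpret mu: sigma_finite_measure \<mu> by (rule sigma_finite_measure_radon[OF assms(2)])
  interpret pair_sigma_finite \<nu> \<mu> ..
  show ?thesis by (rule sigma_finite_measure_completion) (rule P.sigma_finite_measure_axioms)
qed

lemma singular_kernel_bounded_mult:
  fixes \<mu> \<nu> :: "'a::euclidean_space measure"
  assumes rn: "radon_measure \<nu>" and rm: "radon_measure \<mu>"
    and Mm: "M \<in> borel_measurable borel" and MB: "\<And>z. norm (M z) \<le> B"
    and K: "singular_kernel \<mu> \<nu> K"
  shows "singular_kernel \<mu> \<nu> (\<lambda>z. M z * K z)"
  unfolding singular_kernel_def
proof (intro conjI allI impI)
  define Q where "Q = completion (\<nu> \<Otimes>\<^sub>M \<mu>)"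
  have "M \<in> borel_measurable Q"
    unfolding Q_def by (rule borel_measurable_completion_pair_radon[OF rn rm Mm])
  moreover have KQ: "K \<in> borel_measurable Q" using K unfolding singular_kernel_def Q_def by blast
  ultimately show "(\<lambda>z. M z * K z) \<in> borel_measurable (completion (\<nu> \<Otimes>\<^sub>M \<mu>))"
    unfolding Q_def by (rule borel_measurable_times)
  fix D :: "('a \<times> 'a) set" assume D: "compact D \<and> D \<inter> {z. fst z = snd z} = {}"
  then have DQ: "D \<in> sets Q"
    unfolding Q_def by (blast intro: compact_in_sets_completion_pair_radon[OF rn rm])
  have "(\<integral>\<^sup>+ z. ennreal ((norm (M z * K z))\<^sup>2) * indicator D z \<partial>Q)
      \<le> (\<integral>\<^sup>+ z. ennreal (B\<^sup>2) * (ennreal ((norm (K z))\<^sup>2) * indicator D z) \<partial>Q)"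
  proof (intro nn_integral_mono)
    fix z
    have "(norm (M z * K z))\<^sup>2 \<le> B\<^sup>2 * (norm (K z))\<^sup>2"
      unfolding norm_mult power_mult_distrib by (intro mult_right_mono power_mono MB) auto
    then show "ennreal ((norm (M z * K z))\<^sup>2) * indicator D z
        \<le> ennreal (B\<^sup>2) * (ennreal ((norm (K z))\<^sup>2) * indicator D z)"
      by (auto simp: indicator_def ennreal_mult[symmetric] intro: ennreal_leI)
  qed
  also have "\<dots> = ennreal (B\<^sup>2) * (\<integral>\<^sup>+ z. ennreal ((norm (K z))\<^sup>2) * indicator D z \<partial>Q)"
    by (rule nn_integral_cmult) (use KQ DQ in measurable)
  also have "\<dots> < \<infinity>"
    using K D unfolding singular_kernel_def Q_def by (simp add: ennreal_mult_less_top)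
  finally show "(\<integral>\<^sup>+ z. ennreal ((norm (M z * K z))\<^sup>2) * indicator D z \<partial>completion (\<nu> \<Otimes>\<^sub>M \<mu>)) < \<infinity>"
    unfolding Q_def .
qed

lemma borel_measurable_cis [measurable]: "cis \<in> borel_measurable borel"
  by (intro borel_measurable_continuous_onI continuous_on_cis continuous_on_id)

lemma norm_fourier_le: "norm (fourier h \<xi>) \<le> (\<integral>x. norm (h x) \<partial>lborel)"
  unfolding fourier_def by (rule integral_norm_bound[THEN order_trans]) (simp add: norm_mult)

lemma borel_measurable_fourier:
  assumes [measurable]: "h \<in> borel_measurable borel"
  shows "fourier h \<in> borel_measurable borel"
proof -
  have "(\<lambda>(\<xi>, x). h x * cis (- (\<xi> \<bullet> x))) \<in> borel_measurable (borel \<Otimes>\<^sub>M lborel)"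
    by measurable
  then show ?thesis
    unfolding fourier_def[abs_def] by (rule lborel.borel_measurable_lebesgue_integral)
qed

definition modulate :: "('a::real_inner \<Rightarrow> complex) \<Rightarrow> 'a \<Rightarrow> 'a \<Rightarrow> complex" where
  "modulate f \<xi> t = f t * cis (- (t \<bullet> \<xi>))"

lemma norm_modulate [simp]: "norm (modulate f \<xi> t) = norm (f t)"
  by (simp add: modulate_def norm_mult)

lemma fsupp_modulate [simp]: "fsupp (modulate f \<xi>) = fsupp f"
  unfolding fsupp_def modulate_def by simp

lemma Lp_norm_modulate [simp]: "Lp_norm \<mu> p (modulate f \<xi>) = Lp_norm \<mu> p f"
  unfolding Lp_norm_def by simp

lemma admissible_pair_modulate:
  assumes "admissible_pair f g"
  shows "admissible_pair (modulate f \<xi>) (modulate g \<eta>)"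
proof -
  have [measurable]: "f \<in> borel_measurable borel" "g \<in> borel_measurable borel"
    using assms unfolding admissible_pair_def by blast+
  have "modulate f \<xi> \<in> borel_measurable borel" "modulate g \<eta> \<in> borel_measurable borel"
    unfolding modulate_def[abs_def] by measurable
  moreover have "bounded (range (modulate f \<xi>))" "bounded (range (modulate g \<eta>))"
    using assms unfolding admissible_pair_def bounded_iff by auto
  ultimately show ?thesis
    using assms unfolding admissible_pair_def fsupp_modulate by blast
qed

lemma cis_inner_times_kernel_pairing:
  "cis (- (z \<bullet> w)) * (K z * f (snd z) * g (fst z))
    = K z * modulate f (snd w) (snd z) * modulate g (fst w) (fst z)"
  by (cases z; cases w) (simp add: modulate_def cis_mult algebra_simps)

lemma integrable_fourier_kernel_product:
  fixes \<mu> \<nu> :: "'a::euclidean_space measure"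
  assumes rn: "radon_measure \<nu>" and rm: "radon_measure \<mu>"
    and K: "singular_kernel \<mu> \<nu> K" and fg: "admissible_pair f g"
    and h: "integrable lborel h"
  shows "integrable (lborel \<Otimes>\<^sub>M completion (\<nu> \<Otimes>\<^sub>M \<mu>))
    (\<lambda>(w, z). h w * (K z * modulate f (snd w) (snd z) * modulate g (fst w) (fst z)))"
proof -
  define Q where "Q = completion (\<nu> \<Otimes>\<^sub>M \<mu>)"
  interpret Q: sigma_finite_measure Q
    unfolding Q_def by (rule sigma_finite_measure_completion_pair_radon[OF rn rm])
  interpret pair_sigma_finite lborel Q ..
  have kfg: "integrable Q (\<lambda>z. K z * f (snd z) * g (fst z))"
    unfolding Q_def by (rule integrable_kernel_admissible_pair[OF rn rm K fg])
  have tensor: "h w * (K z * modulate f (snd w) (snd z) * modulate g (fst w) (fst z))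
      = h w * cis (- (z \<bullet> w)) * (K z * f (snd z) * g (fst z))" for w z
    unfolding cis_inner_times_kernel_pairing[symmetric] by (simp only: mult.assoc)
  have hm [measurable]: "h \<in> borel_measurable borel" using h by simp
  have "(\<lambda>z. z) \<in> borel_measurable Q"
    unfolding Q_def by (rule borel_measurable_completion_pair_radon[OF rn rm]) simp
  then have [measurable]: "(\<lambda>x. snd x) \<in> borel_measurable (lborel \<Otimes>\<^sub>M Q)"
    by (rule measurable_compose[OF measurable_snd])
  have [measurable]: "(\<lambda>x. K (snd x) * f (snd (snd x)) * g (fst (snd x))) \<in> borel_measurable (lborel \<Otimes>\<^sub>M Q)"
    by (rule measurable_compose[OF measurable_snd borel_measurable_integrable[OF kfg]])
  have "(\<lambda>x. h (fst x) * cis (- (snd x \<bullet> fst x)) * (K (snd x) * f (snd (snd x)) * g (fst (snd x))))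
      \<in> borel_measurable (lborel \<Otimes>\<^sub>M Q)"
    by measurable
  then have "(\<lambda>(w, z). h w * (K z * modulate f (snd w) (snd z) * modulate g (fst w) (fst z)))
      \<in> borel_measurable (lborel \<Otimes>\<^sub>M Q)"
    by (simp add: tensor case_prod_beta')
  moreover have "integrable lborel (\<lambda>w. norm (h w) * (\<integral>z. norm (K z * f (snd z) * g (fst z)) \<partial>Q))"
    using h by (intro integrable_mult_left integrable_norm)
  then have "integrable lborel
      (\<lambda>w. \<integral>z. norm (h w * (K z * modulate f (snd w) (snd z) * modulate g (fst w) (fst z))) \<partial>Q)"
    by (simp add: norm_mult)
  moreover have "integrable Q (\<lambda>z. h w * (K z * modulate f (snd w) (snd z) * modulate g (fst w) (fst z)))" for w
    unfolding Q_def
    by (intro integrable_mult_right integrable_kernel_admissible_pair[OF rn rm K] admissible_pair_modulate fg)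
  ultimately show ?thesis
    unfolding Q_def[symmetric] by (intro Fubini_integrable) auto
qed

lemma pairing_fourier_mult_kernel:
  fixes \<mu> \<nu> :: "'a::euclidean_space measure"
  assumes rn: "radon_measure \<nu>" and rm: "radon_measure \<mu>"
    and K: "singular_kernel \<mu> \<nu> K" and fg: "admissible_pair f g"
    and h: "integrable lborel h"
  shows "(\<integral>z. fourier h z * K z * f (snd z) * g (fst z) \<partial>completion (\<nu> \<Otimes>\<^sub>M \<mu>))
    = (\<integral>w. h w * (\<integral>z. K z * modulate f (snd w) (snd z) * modulate g (fst w) (fst z)
                      \<partial>completion (\<nu> \<Otimes>\<^sub>M \<mu>)) \<partial>lborel)"
proof -
  define Q where "Q = completion (\<nu> \<Otimes>\<^sub>M \<mu>)"
  interpret Q: sigma_finite_measure Q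
    unfolding Q_def by (rule sigma_finite_measure_completion_pair_radon[OF rn rm])
  interpret pair_sigma_finite lborel Q ..
  have "fourier h z * K z * f (snd z) * g (fst z)
      = (\<integral>w. h w * (K z * modulate f (snd w) (snd z) * modulate g (fst w) (fst z)) \<partial>lborel)" for z
  proof -
    have "fourier h z * K z * f (snd z) * g (fst z) = fourier h z * (K z * f (snd z) * g (fst z))"
      by (simp only: mult.assoc)
    also have "\<dots> = (\<integral>w. h w * cis (- (z \<bullet> w)) * (K z * f (snd z) * g (fst z)) \<partial>lborel)"
      unfolding fourier_def by (rule integral_mult_left_zero[symmetric])
    finally show ?thesis
      by (simp only: mult.assoc cis_inner_times_kernel_pairing[unfolded mult.assoc])
  qed
  then have "(\<integral>z. fourier h z * K z * f (snd z) * g (fst z) \<partial>Q)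
      = (\<integral>z. (\<integral>w. h w * (K z * modulate f (snd w) (snd z) * modulate g (fst w) (fst z)) \<partial>lborel) \<partial>Q)"
    by simp
  also have "\<dots> = (\<integral>w. (\<integral>z. h w * (K z * modulate f (snd w) (snd z) * modulate g (fst w) (fst z)) \<partial>Q) \<partial>lborel)"
    using integrable_fourier_kernel_product[OF rn rm K fg h] unfolding Q_def[symmetric]
    by (rule Fubini_integral)
  finally show ?thesis unfolding Q_def by simp
qed

lemma restr_Lp_bounded_fourier_mult:
  fixes \<mu> \<nu> :: "'a::euclidean_space measure"
  assumes rn: "radon_measure \<nu>" and rm: "radon_measure \<mu>"
    and K: "singular_kernel \<mu> \<nu> K" and KC: "restr_Lp_bounded p \<mu> \<nu> K C"
    and h: "integrable lborel h"
  shows "restr_Lp_bounded p \<mu> \<nu> (\<lambda>z. fourier h z * K z) ((\<integral>x. norm (h x) \<partial>lborel) * C)"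
  unfolding restr_Lp_bounded_def
proof (intro allI impI)
  fix f g :: "'a \<Rightarrow> complex" assume fg: "admissible_pair f g"
  define Q where "Q = completion (\<nu> \<Otimes>\<^sub>M \<mu>)"
  define I where "I w = (\<integral>z. K z * modulate f (snd w) (snd z) * modulate g (fst w) (fst z) \<partial>Q)" for w
  define c where "c = C * Lp_norm \<mu> p f * Lp_norm \<nu> (p / (p - 1)) g"
  have I_bound: "norm (I w) \<le> c" for w
  proof -
    have "norm (I w) \<le> C * Lp_norm \<mu> p (modulate f (snd w)) * Lp_norm \<nu> (p / (p - 1)) (modulate g (fst w))"
      using KC admissible_pair_modulate[OF fg] unfolding restr_Lp_bounded_def I_def Q_def by blast
    then show ?thesis by (simp add: c_def)
  qed
  interpret Q: sigma_finite_measure Q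
    unfolding Q_def by (rule sigma_finite_measure_completion_pair_radon[OF rn rm])
  interpret pair_sigma_finite lborel Q ..
  have "integrable lborel (\<lambda>w. \<integral>z. h w * (K z * modulate f (snd w) (snd z) * modulate g (fst w) (fst z)) \<partial>Q)"
    using integrable_fst'[OF integrable_fourier_kernel_product[OF rn rm K fg h, folded Q_def]] by simp
  then have hI: "integrable lborel (\<lambda>w. h w * I w)"
    unfolding I_def by (simp add: mult.assoc)
  have "norm (\<integral>z. fourier h z * K z * f (snd z) * g (fst z) \<partial>Q) = norm (\<integral>w. h w * I w \<partial>lborel)"
    unfolding I_def Q_def by (simp only: pairing_fourier_mult_kernel[OF rn rm K fg h])
  also have "\<dots> \<le> (\<integral>w. norm (h w) * c \<partial>lborel)"
  proof (rule Bochner_Integration.integral_norm_bound_integral[OF hI])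
    show "integrable lborel (\<lambda>w. norm (h w) * c)" using h by (intro integrable_mult_left integrable_norm)
    show "norm (h w * I w) \<le> norm (h w) * c" for w
      unfolding norm_mult by (intro mult_left_mono I_bound norm_ge_zero)
  qed
  also have "\<dots> = (\<integral>x. norm (h x) \<partial>lborel) * C * Lp_norm \<mu> p f * Lp_norm \<nu> (p / (p - 1)) g"
    by (simp add: c_def mult.assoc)
  finally show "norm (\<integral>z. fourier h z * K z * f (snd z) * g (fst z) \<partial>completion (\<nu> \<Otimes>\<^sub>M \<mu>))
      \<le> (\<integral>x. norm (h x) \<partial>lborel) * C * Lp_norm \<mu> p f * Lp_norm \<nu> (p / (p - 1)) g"
    unfolding Q_def .
qed

theorem lemma2p6:
  fixes \<mu> \<nu> :: "'a::euclidean_space measure"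
    and p :: real
    and M h :: "'a \<times> 'a \<Rightarrow> complex"
  assumes "1 < p"
    and "radon_measure \<mu>" and "radon_measure \<nu>"
    and "integrable lborel h"
    and "M = fourier h"
  shows "schur_multiplier_bound p \<mu> \<nu> M (\<integral>x. norm (h x) \<partial>lborel)"
  unfolding schur_multiplier_bound_def \<open>M = fourier h\<close>
proof (intro allI impI conjI; elim conjE)
  fix K C assume K: "singular_kernel \<mu> \<nu> K" and KC: "restr_Lp_bounded p \<mu> \<nu> K C"
  have "fourier h \<in> borel_measurable borel"
    using \<open>integrable lborel h\<close> by (intro borel_measurable_fourier) simp
  with assms(2,3) K show "singular_kernel \<mu> \<nu> (\<lambda>z. fourier h z * K z)"
    by (intro singular_kernel_bounded_mult[where B = "\<integral>x. norm (h x) \<partial>lborel"] norm_fourier_le)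
  show "restr_Lp_bounded p \<mu> \<nu> (\<lambda>z. fourier h z * K z) ((\<integral>x. norm (h x) \<partial>lborel) * C)"
    using restr_Lp_bounded_fourier_mult[OF assms(3,2) K KC assms(4)] .
qed

end
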